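(* Let $\mathcal{P}$ be a parametrised propositional logic program over a finite alphabet $\Sigma=\Sigma_p\cup\Sigma_d$ that is positive (no negation occurs in rule bodies). Then the parametrised immediate consequence operator $\mathcal{T}_{\mathcal{P}}:L^d_p\to L^d_p$ is monotone, and for every $\Sigma$-interpretation $J$: $J\models_{wf}\mathcal{P}$ if and only if $J\models\mathrm{Th}(\mathrm{lfp}(\mathcal{T}_{\mathcal{P}}))$.
   Context: A parametrised logic program $\mathcal{P}$ is a finite set of rules $h\leftarrow l_1\wedge\dots\wedge l_n$ where $h\in\Sigma_d$ and each $l_i$ is an atom of $\Sigma$ or its negation; $\Sigma_p$ are parameter symbols, $\Sigma_d$ defined symbols. For $q\in\Sigma_d$, $\varphi_q$ is the disjunction of the bodies of all rules with head $q$ (empty disjunction $=$ false, empty body $=$ true). $L_p$: equivalence classes $\overline\varphi$ of propositional formulas over $\Sigma_p$ ordered by entailment; $L^d_p$: maps $\Sigma_d\to L_p$ ordered pointwise (symbolic interpretations). Evaluation of a formula $\varphi$ over $\Sigma$ in $\mathcal{A}\in L^d_p$: replace each $q\in\Sigma_d$ by a representative of $\mathcal{A}(q)$ and keep atoms of $\Sigma_p$, taking the equivalence class; $\mathcal{T}_{\mathcal{P}}(\mathcal{A})(q)=\varphi_q^{\mathcal{A}}$. $\mathrm{Th}(\mathcal{A})$ is the propositional theory $\bigwedge_{q\in\Sigma_d}(q\leftrightarrow\psi_q)$ with $\psi_q$ a representative of $\mathcal{A}(q)$ (unique up to equivalence). Parametrised well-founded semantics: for $I\in 2^{\Sigma_p}$,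 $T^I_{\mathcal{P}}:2^{\Sigma_d}\to 2^{\Sigma_d}$ maps $J'$ to $\{q\mid \varphi_q\text{ true in }I\cup J'\}$, and $\Psi^I_{\mathcal{P}}$ on pairs $(J_1,J_2)$ of $\Sigma_d$-interpretations is Fitting's operator: $\Psi^I_{\mathcal{P}}(J_1,J_2)_1=\{q\mid\exists$ rule with head $q$ whose body is true under Kleene three-valued evaluation in $(J_1,J_2)$ with $\Sigma_p$ fixed to $I\}$, $\Psi^I_{\mathcal{P}}(J_1,J_2)_2=\{q\mid\exists$ rule with head $q$ whose body is not false there$\}$. A partial $\Psi$-stable fixpoint is $(x,y)$ with $x=\mathrm{lfp}(\Psi(\cdot,y)_1)$, $y=\mathrm{lfp}(\Psi(x,\cdot)_2)$, and the $\Psi$-well-founded fixpoint is the least precise such pair (precision: $(x,y)\leq_p(u,v)$ iff $x\subseteq u$, $v\subseteq y$). $J\models_{wf}\mathcal{P}$ iff $(J\cap\Sigma_d,J\cap\Sigma_d)$ is the $\Psi^{J\cap\Sigma_p}_{\mathcal{P}}$-well-founded fixpoint of $T^{J\cap\Sigma_p}_{\mathcal{P}}$. $\models$ is classical propositional satisfaction. *)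

theory Defs
  imports Main
begin

datatype 'a form =
    Atom 'a
  | FTrue
  | FFalse
  | FNot "'a form"
  | FAnd "'a form" "'a form"
  | FOr "'a form" "'a form"
  | FIff "'a form" "'a form"

fun sat :: "'a set \<Rightarrow> 'a form \<Rightarrow> bool" where
  "sat I (Atom a) = (a \<in> I)"
| "sat I FTrue = True"
| "sat I FFalse = False"
| "sat I (FNot \<phi>) = (\<not> sat I \<phi>)"
| "sat I (FAnd \<phi> \<psi>) = (sat I \<phi> \<and> sat I \<psi>)"
| "sat I (FOr \<phi> \<psi>) = (sat I \<phi> \<or> sat I \<psi>)"
| "sat I (FIff \<phi> \<psi>) = (sat I \<phi> \<longleftrightarrow> sat I \<psi>)"

fun subst :: "('a \<Rightarrow> 'b form) \<Rightarrow> 'a form \<Rightarrow> 'b form" where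
  "subst s (Atom a) = s a"
| "subst s FTrue = FTrue"
| "subst s FFalse = FFalse"
| "subst s (FNot \<phi>) = FNot (subst s \<phi>)"
| "subst s (FAnd \<phi> \<psi>) = FAnd (subst s \<phi>) (subst s \<psi>)"
| "subst s (FOr \<phi> \<psi>) = FOr (subst s \<phi>) (subst s \<psi>)"
| "subst s (FIff \<phi> \<psi>) = FIff (subst s \<phi>) (subst s \<psi>)"

text \<open>Alphabet: parameter symbols of type 'p (Sigma_p), defined symbols of type 'd
  (Sigma_d); atoms of Sigma are of type 'p + 'd (Inl = parameter, Inr = defined).\<close>

datatype 'a lit = PosL 'a | NegL 'a

type_synonym ('p, 'd) rule = "'d \<times> ('p + 'd) lit list"
type_synonym ('p, 'd) program = "('p, 'd) rule list"

definition positive :: "('p, 'd) program \<Rightarrow> bool" where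
  "positive P \<longleftrightarrow> (\<forall>r \<in> set P. \<forall>l \<in> set (snd r). \<exists>a. l = PosL a)"

fun lit_form :: "'a lit \<Rightarrow> 'a form" where
  "lit_form (PosL a) = Atom a"
| "lit_form (NegL a) = FNot (Atom a)"

definition body_form :: "('p + 'd) lit list \<Rightarrow> ('p + 'd) form" where
  "body_form ls = foldr (\<lambda>l \<phi>. FAnd (lit_form l) \<phi>) ls FTrue"

definition phi :: "('p, 'd) program \<Rightarrow> 'd \<Rightarrow> ('p + 'd) form" where
  "phi P q = foldr (\<lambda>r \<phi>. FOr (body_form (snd r)) \<phi>) (filter (\<lambda>r. fst r = q) P) FFalse"

quotient_type 'p lp = "'p form" / "\<lambda>\<phi> \<psi>. \<forall>I. sat I \<phi> = sat I \<psi>"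
  by (intro equivpI reflpI sympI transpI) auto

instantiation lp :: (type) order
begin

lift_definition less_eq_lp :: "'p lp \<Rightarrow> 'p lp \<Rightarrow> bool"
  is "\<lambda>\<phi> \<psi>. \<forall>I. sat I \<phi> \<longrightarrow> sat I \<psi>" by auto

definition less_lp :: "'p lp \<Rightarrow> 'p lp \<Rightarrow> bool" where
  "less_lp x y \<longleftrightarrow> x \<le> y \<and> \<not> y \<le> x"

instance
proof
  fix x y z :: "'p lp"
  show "(x < y) = (x \<le> y \<and> \<not> y \<le> x)" by (simp add: less_lp_def)
  show "x \<le> x" by transfer auto
  show "x \<le> y \<Longrightarrow> y \<le> z \<Longrightarrow> x \<le> z" by transfer auto
  show "x \<le> y \<Longrightarrow> y \<le> x \<Longrightarrow> x = y" by transfer auto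
qed

end

definition eval_sym :: "('p + 'd) form \<Rightarrow> ('d \<Rightarrow> 'p lp) \<Rightarrow> 'p lp" where
  "eval_sym \<phi> A = abs_lp (subst (\<lambda>a. case a of Inl p \<Rightarrow> Atom p | Inr q \<Rightarrow> rep_lp (A q)) \<phi>)"

definition TP :: "('p, 'd) program \<Rightarrow> ('d \<Rightarrow> 'p lp) \<Rightarrow> ('d \<Rightarrow> 'p lp)" where
  "TP P A = (\<lambda>q. eval_sym (phi P q) A)"

definition least_fixpoint :: "('a::order \<Rightarrow> 'a) \<Rightarrow> 'a" where
  "least_fixpoint f = (THE x. f x = x \<and> (\<forall>y. f y = y \<longrightarrow> x \<le> y))"

definition Th :: "('d \<Rightarrow> 'p lp) \<Rightarrow> ('p + 'd) form set" where
  "Th A = {FIff (Atom (Inr q)) (map_form Inl (rep_lp (A q))) | q. True}"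

definition models :: "'a set \<Rightarrow> 'a form set \<Rightarrow> bool" where
  "models J \<Gamma> \<longleftrightarrow> (\<forall>\<phi> \<in> \<Gamma>. sat J \<phi>)"

text \<open>Fitting's operator Psi^I on pairs (J1, J2): truth of literals under the
  three-valued (Kleene) evaluation in (J1,J2) with parameters fixed to I.\<close>
fun lit_true :: "'p set \<Rightarrow> 'd set \<Rightarrow> 'd set \<Rightarrow> ('p + 'd) lit \<Rightarrow> bool" where
  "lit_true I J1 J2 (PosL (Inl p)) = (p \<in> I)"
| "lit_true I J1 J2 (PosL (Inr q)) = (q \<in> J1)"
| "lit_true I J1 J2 (NegL (Inl p)) = (p \<notin> I)"
| "lit_true I J1 J2 (NegL (Inr q)) = (q \<notin> J2)"

fun lit_not_false :: "'p set \<Rightarrow> 'd set \<Rightarrow> 'd set \<Rightarrow> ('p + 'd) lit \<Rightarrow> bool" where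
  "lit_not_false I J1 J2 (PosL (Inl p)) = (p \<in> I)"
| "lit_not_false I J1 J2 (PosL (Inr q)) = (q \<in> J2)"
| "lit_not_false I J1 J2 (NegL (Inl p)) = (p \<notin> I)"
| "lit_not_false I J1 J2 (NegL (Inr q)) = (q \<notin> J1)"

definition Psi1 :: "('p, 'd) program \<Rightarrow> 'p set \<Rightarrow> 'd set \<Rightarrow> 'd set \<Rightarrow> 'd set" where
  "Psi1 P I J1 J2 = {q. \<exists>r \<in> set P. fst r = q \<and> (\<forall>l \<in> set (snd r). lit_true I J1 J2 l)}"

definition Psi2 :: "('p, 'd) program \<Rightarrow> 'p set \<Rightarrow> 'd set \<Rightarrow> 'd set \<Rightarrow> 'd set" where
  "Psi2 P I J1 J2 = {q. \<exists>r \<in> set P. fst r = q \<and> (\<forall>l \<in> set (snd r). lit_not_false I J1 J2 l)}"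

definition partial_stable :: "('p, 'd) program \<Rightarrow> 'p set \<Rightarrow> 'd set \<Rightarrow> 'd set \<Rightarrow> bool" where
  "partial_stable P I x y \<longleftrightarrow>
     x = lfp (\<lambda>x'. Psi1 P I x' y) \<and> y = lfp (\<lambda>y'. Psi2 P I x y')"

text \<open>The Psi-well-founded fixpoint: the least precise partial stable fixpoint
  (precision: (x,y) <=_p (u,v) iff x \<subseteq> u and v \<subseteq> y).\<close>
definition wf_fixpoint :: "('p, 'd) program \<Rightarrow> 'p set \<Rightarrow> 'd set \<Rightarrow> 'd set \<Rightarrow> bool" where
  "wf_fixpoint P I x y \<longleftrightarrow> partial_stable P I x y \<and>
     (\<forall>u v. partial_stable P I u v \<longrightarrow> x \<subseteq> u \<and> v \<subseteq> y)"

definition wf_model :: "('p, 'd) program \<Rightarrow> ('p + 'd) set \<Rightarrow> bool" where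
  "wf_model P J \<longleftrightarrow> wf_fixpoint P {p. Inl p \<in> J} {q. Inr q \<in> J} {q. Inr q \<in> J}"

end

theory Submission
  imports Defs
begin

text \<open>Instantiating a symbolic interpretation \<open>A\<close> at a parameter interpretation \<open>I\<close> yields
  the set of defined atoms whose formula holds under \<open>I\<close>. This instantiation turns
  \<open>\<T>\<^sub>\<P>\<close> into the classical operator \<open>T\<^sup>I\<^sub>\<P>\<close>, and symbolic interpretations are ordered
  exactly by their instances. For a positive program the Kleene iterates of \<open>T\<^sup>I\<^sub>\<P>\<close> from
  \<open>\<emptyset>\<close> stabilise after \<open>|\<Sigma>\<^sub>d|\<close> steps, uniformly in \<open>I\<close>, so the matching iterate of \<open>\<T>\<^sub>\<P>\<close> is
  its least fixpoint and instantiates to \<open>lfp T\<^sup>I\<^sub>\<P>\<close>. On the other side, Fitting's operator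
  of a positive program ignores one component of the pair, so its only partial stable
  fixpoint is \<open>(lfp T\<^sup>I\<^sub>\<P>, lfp T\<^sup>I\<^sub>\<P>)\<close>. Finally \<open>J \<Turnstile> Th(A)\<close> says precisely that the defined
  part of \<open>J\<close> is the instance of \<open>A\<close> at the parameter part of \<open>J\<close>.\<close>

lemma sat_rep_abs_lp: "sat I (rep_lp (abs_lp \<phi>)) = sat I \<phi>"
  using Quotient3_rep_abs[OF Quotient3_lp, of \<phi>] by auto

lemma less_eq_lp_iff: "(x::'p lp) \<le> y \<longleftrightarrow> (\<forall>I. sat I (rep_lp x) \<longrightarrow> sat I (rep_lp y))"
  by (simp add: less_eq_lp_def)

lemma sat_subst: "sat I (subst s \<phi>) = sat {a. sat I (s a)} \<phi>"
  by (induction \<phi>) auto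

lemma sat_map_form: "sat J (map_form f \<phi>) = sat {a. f a \<in> J} \<phi>"
  by (induction \<phi>) auto

lemma sat_lit_form:
  "sat K (lit_form l) = lit_true {p. Inl p \<in> K} {q. Inr q \<in> K} {q. Inr q \<in> K} l"
  by (cases l rule: lit_form.cases; rename_tac a; case_tac a) auto

lemma sat_body_form: "sat K (body_form ls) = (\<forall>l\<in>set ls. sat K (lit_form l))"
  unfolding body_form_def by (induction ls) auto

lemma sat_phi_iff_Psi1:
  fixes K :: "('p + 'd) set"
  shows "sat K (phi P q) \<longleftrightarrow> q \<in> Psi1 P {p. Inl p \<in> K} {q. Inr q \<in> K} {q. Inr q \<in> K}"
proof -
  have sat_foldr: "sat K (foldr (\<lambda>r \<phi>. FOr (body_form (snd r)) \<phi>) rs FFalse)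
          \<longleftrightarrow> (\<exists>r\<in>set rs. sat K (body_form (snd r)))" for rs :: "('p, 'd) rule list"
    by (induction rs) auto
  show ?thesis
    unfolding phi_def Psi1_def sat_foldr sat_body_form sat_lit_form by force
qed

text \<open>The paper's \<open>T\<^sup>I\<^sub>\<P>\<close>: by \<open>sat_phi_iff_Psi1\<close>, \<open>q \<in> T_param P I X\<close> iff \<open>\<phi>\<^sub>q\<close> holds
  in \<open>I \<union> X\<close>.\<close>
definition T_param :: "('p, 'd) program \<Rightarrow> 'p set \<Rightarrow> 'd set \<Rightarrow> 'd set" where
  "T_param P I X = Psi1 P I X X"

definition instantiate :: "('d \<Rightarrow> 'p lp) \<Rightarrow> 'p set \<Rightarrow> 'd set" where
  "instantiate A I = {q. sat I (rep_lp (A q))}"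

lemma less_eq_iff_instantiate_subset:
  "(A::'d \<Rightarrow> 'p lp) \<le> B \<longleftrightarrow> (\<forall>I. instantiate A I \<subseteq> instantiate B I)"
  by (auto simp: le_fun_def less_eq_lp_iff instantiate_def)

lemma eq_iff_instantiate_eq:
  "(A::'d \<Rightarrow> 'p lp) = B \<longleftrightarrow> (\<forall>I. instantiate A I = instantiate B I)"
  by (metis antisym less_eq_iff_instantiate_subset order_refl)

lemma instantiate_TP: "instantiate (TP P A) I = T_param P I (instantiate A I)"
proof -
  let ?s = "\<lambda>a. case a of Inl p \<Rightarrow> Atom p | Inr q \<Rightarrow> rep_lp (A q)"
  have "sat I (rep_lp (TP P A q)) = sat {a. sat I (?s a)} (phi P q)" for q
    unfolding TP_def eval_sym_def sat_rep_abs_lp sat_subst ..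
  moreover have "{p. Inl p \<in> {a. sat I (?s a)}} = I"
    and "{q. Inr q \<in> {a. sat I (?s a)}} = instantiate A I"
    by (auto simp: instantiate_def)
  ultimately show ?thesis
    unfolding sat_phi_iff_Psi1 T_param_def by (auto simp: instantiate_def)
qed

lemma lit_PosL_ignores:
  "lit_true I X Y (PosL a) = lit_true I X Y' (PosL a)"
  "lit_not_false I X Y (PosL a) = lit_true I Y Y' (PosL a)"
  by (cases a; simp)+

lemma lit_true_PosL_mono: "lit_true I X Y (PosL a) \<Longrightarrow> X \<subseteq> X' \<Longrightarrow> lit_true I X' Y' (PosL a)"
  by (cases a) auto

lemma positive_body_PosL:
  "positive P \<Longrightarrow> r \<in> set P \<Longrightarrow> l \<in> set (snd r) \<Longrightarrow> \<exists>a. l = PosL a"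
  unfolding positive_def by blast

lemma Psi1_positive: "positive P \<Longrightarrow> Psi1 P I X Y = T_param P I X"
  unfolding T_param_def Psi1_def
  by (intro Collect_cong bex_cong conj_cong ball_cong refl)
     (metis positive_body_PosL lit_PosL_ignores(1))

lemma Psi2_positive: "positive P \<Longrightarrow> Psi2 P I X Y = T_param P I Y"
  unfolding T_param_def Psi1_def Psi2_def
  by (intro Collect_cong bex_cong conj_cong ball_cong refl)
     (metis positive_body_PosL lit_PosL_ignores(2))

lemma mono_T_param:
  assumes "positive P"
  shows "mono (T_param P I)"
proof (rule monoI, rule subsetI)
  fix X X' q assume "X \<subseteq> X'" "q \<in> T_param P I X"
  then obtain r where r: "r \<in> set P" "fst r = q" "\<forall>l\<in>set (snd r). lit_true I X X l"
    by (auto simp: T_param_def Psi1_def)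
  have "lit_true I X' X' l" if "l \<in> set (snd r)" for l
    using r(3) that \<open>X \<subseteq> X'\<close> positive_body_PosL[OF assms r(1) that] lit_true_PosL_mono
    by blast
  with r show "q \<in> T_param P I X'" by (auto simp: T_param_def Psi1_def)
qed

lemma mono_TP: "positive P \<Longrightarrow> mono (TP P)"
  unfolding mono_def less_eq_iff_instantiate_subset instantiate_TP
  by (metis mono_T_param monoD)

lemma wf_fixpoint_diagonal_iff:
  assumes "positive P"
  shows "wf_fixpoint P I X X \<longleftrightarrow> X = lfp (T_param P I)"
  unfolding wf_fixpoint_def partial_stable_def Psi1_positive[OF assms] Psi2_positive[OF assms]
  by auto

lemma funpow_card_stable:
  fixes G :: "'a::finite set \<Rightarrow> 'a set"
  assumes "mono G"
  shows "(G ^^ Suc (card (UNIV::'a set))) {} = (G ^^ card (UNIV::'a set)) {}"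
proof -
  let ?f = "\<lambda>n. (G ^^ n) {}"
  have mono_f: "mono ?f"
    using mono_funpow[OF assms] by (simp add: bot_set_def)
  have "?f (card (UNIV::'a set)) = (\<Union>n. ?f n)"
    by (intro finite_mono_strict_prefix_implies_finite_fixpoint[where S = UNIV] mono_f)
       (auto intro: finite_mono_remains_stable_implies_strict_prefix[OF _ mono_f])
  moreover have "?f (Suc (card (UNIV::'a set))) \<subseteq> (\<Union>n. ?f n)"
    by blast
  ultimately show ?thesis
    using monoD[OF mono_f, of "card (UNIV::'a set)" "Suc (card (UNIV::'a set))"] by auto
qed

lemma lfp_eq_funpow_card:
  fixes G :: "'a::finite set \<Rightarrow> 'a set"
  assumes "mono G"
  shows "lfp G = (G ^^ card (UNIV::'a set)) {}"
  using lfp_Kleene_iter[OF assms funpow_card_stable[OF assms]] by (simp add: bot_set_def)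

lemma least_fixpoint_eqI:
  assumes "f x = x" and "\<And>y. f y = y \<Longrightarrow> x \<le> y"
  shows "least_fixpoint f = x"
  unfolding least_fixpoint_def by (rule the_equality) (auto intro: antisym simp: assms)

lemma instantiate_least_fixpoint_TP:
  fixes P :: "('p, 'd::finite) program"
  assumes "positive P"
  shows "instantiate (least_fixpoint (TP P)) I = lfp (T_param P I)"
proof -
  define A where "A = (TP P ^^ card (UNIV::'d set)) (\<lambda>_. abs_lp FFalse)"
  have "instantiate ((TP P ^^ n) (\<lambda>_. abs_lp FFalse)) I = (T_param P I ^^ n) {}" for n I
    by (induction n) (simp_all add: instantiate_TP, simp add: instantiate_def sat_rep_abs_lp)
  then have inst_A: "instantiate A I = lfp (T_param P I)" for I
    unfolding A_def lfp_eq_funpow_card[OF mono_T_param[OF assms]] .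
  have "least_fixpoint (TP P) = A"
  proof (rule least_fixpoint_eqI)
    show "TP P A = A"
      unfolding eq_iff_instantiate_eq instantiate_TP inst_A
      by (simp add: lfp_fixpoint mono_T_param[OF assms])
    show "A \<le> B" if "TP P B = B" for B
    proof -
      have "lfp (T_param P I) \<subseteq> instantiate B I" for I
        by (rule lfp_lowerbound) (use that instantiate_TP[of P B] in simp)
      then show ?thesis
        unfolding less_eq_iff_instantiate_subset inst_A by blast
    qed
  qed
  with inst_A show ?thesis by simp
qed

lemma models_Th_iff: "models J (Th A) \<longleftrightarrow> {q. Inr q \<in> J} = instantiate A {p. Inl p \<in> J}"
  unfolding models_def Th_def instantiate_def by (auto simp: sat_map_form)

theorem theorem4p8:
  fixes P :: "('p::finite, 'd::finite) program"
  assumes "positive P"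
  shows "mono (TP P) \<and>
         (\<forall>J :: ('p + 'd) set. wf_model P J \<longleftrightarrow> models J (Th (least_fixpoint (TP P))))"
  using mono_TP[OF assms]
  unfolding wf_model_def models_Th_iff wf_fixpoint_diagonal_iff[OF assms]
    instantiate_least_fixpoint_TP[OF assms]
  by simp

end
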